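(* Let $X=(\mathbb{R}^n,\|\cdot\|)$ be an $n$-dimensional real CL-space with an absolute norm. Then an element $(|a_1|,\dots,|a_n|)\in S_X$ is a point of upper monotonicity of $X$ if and only if $(|a_1|,\dots,|a_n|)$ is a convex combination of extreme points of $B_X$ all of whose coordinates are nonnegative real numbers.
   Context: A norm on $\mathbb{R}^n$ is absolute if $\|(a_1,\dots,a_n)\|=\|(|a_1|,\dots,|a_n|)\|$ for all scalars and $\|e_j\|=1$ for the canonical basis vectors; $X$ is regarded as a Banach lattice with the coordinatewise order. A Banach space is a CL-space if its unit ball is the absolutely convex hull of every maximal convex subset of its unit sphere; in finite dimensions, equivalently, $|x^*(x)|=1$ for every extreme point $x^*$ of $B_{X^*}$ and every extreme point $x$ of $B_X$. A point $x\in S_X$ with $x\ge0$ is a point of upper monotonicity of $X$ if $\|x+y\|>\|x\|$ for every $y\ge0$ with $y\ne0$. *)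

theory Defs
  imports "HOL-Analysis.Analysis"
begin

definition is_norm_fun :: "(real^'n \<Rightarrow> real) \<Rightarrow> bool" where
  "is_norm_fun N \<longleftrightarrow>
     (\<forall>x. N x = 0 \<longleftrightarrow> x = 0) \<and>
     (\<forall>c x. N (c *\<^sub>R x) = \<bar>c\<bar> * N x) \<and>
     (\<forall>x y. N (x + y) \<le> N x + N y)"

definition absolute_norm :: "(real^'n \<Rightarrow> real) \<Rightarrow> bool" where
  "absolute_norm N \<longleftrightarrow> is_norm_fun N \<and>
     (\<forall>x. N x = N (\<chi> i. \<bar>x $ i\<bar>)) \<and>
     (\<forall>j. N (axis j 1) = 1)"

definition unit_ball :: "(real^'n \<Rightarrow> real) \<Rightarrow> (real^'n) set" where
  "unit_ball N = {x. N x \<le> 1}"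

definition unit_sphere :: "(real^'n \<Rightarrow> real) \<Rightarrow> (real^'n) set" where
  "unit_sphere N = {x. N x = 1}"

definition maximal_convex_subset :: "(real^'n) set \<Rightarrow> (real^'n) set \<Rightarrow> bool" where
  "maximal_convex_subset F S \<longleftrightarrow> F \<subseteq> S \<and> convex F \<and>
     (\<forall>G. G \<subseteq> S \<and> convex G \<and> F \<subseteq> G \<longrightarrow> G = F)"

text \<open>Absolutely convex hull: all combinations sum(lambda_i x_i) with x_i in F and sum |lambda_i| \<le> 1.\<close>
definition abs_convex_hull :: "(real^'n) set \<Rightarrow> (real^'n) set" where
  "abs_convex_hull F = convex hull (F \<union> uminus ` F \<union> {0})"

text \<open>CL-space: the unit ball is the absolutely convex hull of every maximal convex subset
  of the unit sphere (finite-dimensional, so no closure is needed).\<close>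
definition CL_space :: "(real^'n \<Rightarrow> real) \<Rightarrow> bool" where
  "CL_space N \<longleftrightarrow> (\<forall>F. maximal_convex_subset F (unit_sphere N) \<longrightarrow>
       unit_ball N = abs_convex_hull F)"

definition nonneg_vec :: "real^'n \<Rightarrow> bool" where
  "nonneg_vec x \<longleftrightarrow> (\<forall>i. 0 \<le> x $ i)"

definition upper_monotonicity_point :: "(real^'n \<Rightarrow> real) \<Rightarrow> real^'n \<Rightarrow> bool" where
  "upper_monotonicity_point N x \<longleftrightarrow> x \<in> unit_sphere N \<and> nonneg_vec x \<and>
     (\<forall>y. nonneg_vec y \<and> y \<noteq> 0 \<longrightarrow> N (x + y) > N x)"

end

theory Submission
  imports Defs
begin

(* Write E for the set of coordinatewise nonnegative extreme points of the unit ball B.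

   (=>) needs only that the norm is absolute.  By Krein-Milman B is the convex hull of its
   extreme points, and flipping signs of coordinates maps extreme points to extreme points;
   hence every z in B is dominated coordinatewise, |z_j| <= w_j, by some w in conv E.  For a
   point x of upper monotonicity the dominating w = x + (w - x) has norm <= 1 = ||x||, which
   forces w = x.

   (<=) uses the CL property.  Every nonzero extreme point lies in F or -F for each maximal
   convex subset F of the unit sphere, so a norming functional w of F takes the values +-1 on
   extreme points.  Taking absolute values of the coefficients of w gives a nonnegative
   functional g <= ||.|| with g = 1 on E, and choosing F through the direction of e + e_i
   (e in E) makes g_i > 0.  For x in conv E and y >= 0 with y_i > 0 we get
   ||x + y|| >= g(x) + g(y) > 1. *)


section \<open>Norm functions\<close>

lemma norm_fun_zero: "is_norm_fun N \<Longrightarrow> N 0 = 0"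
  unfolding is_norm_fun_def by auto

lemma norm_fun_scale: "is_norm_fun N \<Longrightarrow> N (c *\<^sub>R x) = \<bar>c\<bar> * N x"
  unfolding is_norm_fun_def by auto

lemma norm_fun_triangle: "is_norm_fun N \<Longrightarrow> N (x + y) \<le> N x + N y"
  unfolding is_norm_fun_def by auto

lemma norm_fun_nonneg: "is_norm_fun N \<Longrightarrow> 0 \<le> N x"
  using norm_fun_triangle[of N x "-x"] norm_fun_scale[of N "-1" x] norm_fun_zero[of N] by simp

lemma norm_fun_pos: "is_norm_fun N \<Longrightarrow> x \<noteq> 0 \<Longrightarrow> 0 < N x"
  using norm_fun_nonneg[of N x] unfolding is_norm_fun_def by force

lemma norm_fun_convex_on: "is_norm_fun N \<Longrightarrow> convex_on UNIV N"
  unfolding convex_on_def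
  by (auto intro: order_trans[OF norm_fun_triangle] simp: norm_fun_scale)

lemma convex_sublevel_le:
  assumes f: "convex_on UNIV f" shows "convex {x. f x \<le> c}"
proof (rule convexI)
  fix x y and u v :: real
  assume "x \<in> {x. f x \<le> c}" "y \<in> {x. f x \<le> c}" "0 \<le> u" "0 \<le> v" "u + v = 1"
  then have "f (u *\<^sub>R x + v *\<^sub>R y) \<le> u * f x + v * f y" "u * f x + v * f y \<le> c"
    using f convex_bound_le[of "f x" c "f y" u v] unfolding convex_on_def by auto
  then show "u *\<^sub>R x + v *\<^sub>R y \<in> {x. f x \<le> c}" by simp
qed

lemma convex_sublevel_lt:
  assumes f: "convex_on UNIV f" shows "convex {x. f x < c}"
proof (rule convexI)
  fix x y and u v :: real
  assume "x \<in> {x. f x < c}" "y \<in> {x. f x < c}" "0 \<le> u" "0 \<le> v" "u + v = 1"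
  then have "f (u *\<^sub>R x + v *\<^sub>R y) \<le> u * f x + v * f y" "u * f x + v * f y < c"
    using f convex_bound_lt[of "f x" c "f y" u v] unfolding convex_on_def by auto
  then show "u *\<^sub>R x + v *\<^sub>R y \<in> {x. f x < c}" by simp
qed

lemma norm_fun_continuous: "is_norm_fun N \<Longrightarrow> continuous_on UNIV N"
  by (rule convex_on_continuous) (auto intro: norm_fun_convex_on)

text \<open>A norm function dominates a multiple of the Euclidean norm (its minimum on the
  Euclidean unit sphere), so its unit ball is bounded.\<close>

lemma norm_fun_lower_bound:
  fixes N :: "real^'n \<Rightarrow> real"
  assumes nf: "is_norm_fun N"
  obtains m where "0 < m" "\<And>z. m * norm z \<le> N z"
proof -
  have "axis undefined 1 \<in> sphere (0::real^'n) 1" by simp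
  then obtain z0 where z0: "z0 \<in> sphere (0::real^'n) 1"
    and min: "\<And>z. z \<in> sphere 0 1 \<Longrightarrow> N z0 \<le> N z"
    using continuous_attains_inf[OF compact_sphere _
        continuous_on_subset[OF norm_fun_continuous[OF nf]]]
    by blast
  have "N z0 * norm z \<le> N z" for z
  proof (cases "z = 0")
    case False
    then have "N z0 \<le> N ((1 / norm z) *\<^sub>R z)" by (intro min) simp
    also have "\<dots> = N z / norm z" using norm_fun_scale[OF nf] by simp
    finally show ?thesis using False by (simp add: field_simps)
  qed (simp add: norm_fun_zero[OF nf])
  moreover have "0 < N z0" using z0 by (intro norm_fun_pos[OF nf]) auto
  ultimately show thesis using that by blast
qed

lemma unit_ball_convex: "is_norm_fun N \<Longrightarrow> convex (unit_ball N)"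
  unfolding unit_ball_def by (intro convex_sublevel_le norm_fun_convex_on)

lemma unit_ball_compact:
  fixes N :: "real^'n \<Rightarrow> real"
  assumes nf: "is_norm_fun N"
  shows "compact (unit_ball N)"
proof -
  obtain m where m: "0 < m" "\<And>z. m * norm z \<le> N z" using norm_fun_lower_bound[OF nf] by blast
  have "closed (unit_ball N)" unfolding unit_ball_def
    by (intro closed_Collect_le continuous_on_const norm_fun_continuous[OF nf])
  moreover have "bounded (unit_ball N)" unfolding bounded_iff unit_ball_def
  proof (intro exI ballI)
    fix z assume "z \<in> {x. N x \<le> 1}"
    then have "m * norm z \<le> 1" using m(2)[of z] by simp
    then show "norm z \<le> 1 / m" using m(1) by (simp add: field_simps)
  qed
  ultimately show ?thesis by (simp add: compact_eq_bounded_closed)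
qed

lemma absolute_normD:
  assumes "absolute_norm N"
  shows "is_norm_fun N" "N x = N (\<chi> i. \<bar>x $ i\<bar>)" "N (axis j 1) = 1"
  using assms unfolding absolute_norm_def by auto

lemma absolute_norm_abs_eq:
  "absolute_norm N \<Longrightarrow> (\<And>i. \<bar>x $ i\<bar> = \<bar>y $ i\<bar>) \<Longrightarrow> N x = N y"
  using absolute_normD(2)[of N x] absolute_normD(2)[of N y] by simp


section \<open>Sign flips of coordinates\<close>

definition flip_signs :: "real^'n \<Rightarrow> real^'n \<Rightarrow> real^'n" where
  "flip_signs s z = (\<chi> j. s $ j * z $ j)"

definition sign_vec :: "real^'n \<Rightarrow> real^'n" where
  "sign_vec v = (\<chi> j. if 0 \<le> v $ j then 1 else -1)"

definition signs :: "real^'n \<Rightarrow> bool" where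
  "signs s \<longleftrightarrow> (\<forall>j. \<bar>s $ j\<bar> = 1)"

lemma flip_signs_nth [simp]: "flip_signs s z $ j = s $ j * z $ j"
  unfolding flip_signs_def by simp

lemma signs_sign_vec: "signs (sign_vec v)"
  unfolding signs_def sign_vec_def by simp

lemma flip_sign_vec: "flip_signs (sign_vec v) v = (\<chi> j. \<bar>v $ j\<bar>)"
  unfolding sign_vec_def by (simp add: vec_eq_iff)

lemma flip_signs_invol:
  assumes "signs s" shows "flip_signs s (flip_signs s z) = z"
proof -
  have "s $ j * s $ j = 1" for j
    using assms abs_mult_self_eq[of "s $ j"] unfolding signs_def by simp
  then show ?thesis by (simp add: vec_eq_iff mult.assoc[symmetric])
qed

lemma linear_flip_signs: "linear (flip_signs s)"
  by (rule linearI) (simp_all add: vec_eq_iff distrib_left)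

lemma inj_flip_signs: "signs s \<Longrightarrow> inj (flip_signs s)"
  by (metis injI flip_signs_invol)

lemma absolute_norm_flip_signs: "absolute_norm N \<Longrightarrow> signs s \<Longrightarrow> N (flip_signs s z) = N z"
  unfolding signs_def by (rule absolute_norm_abs_eq) (auto simp: abs_mult)

lemma flip_signs_unit_ball:
  assumes an: "absolute_norm N" and s: "signs s"
  shows "flip_signs s ` unit_ball N = unit_ball N"
proof -
  have flip_in: "flip_signs s z \<in> unit_ball N \<longleftrightarrow> z \<in> unit_ball N" for z
    using absolute_norm_flip_signs[OF an s] unfolding unit_ball_def by auto
  show ?thesis
    using flip_in flip_signs_invol[OF s] by (auto intro: image_eqI[of _ _ "flip_signs s _"])
qed

text \<open>Extreme points are preserved by injective linear maps (via the library's description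
  of extreme points as singleton faces).\<close>

lemma extreme_point_linear_image:
  "linear f \<Longrightarrow> inj f \<Longrightarrow> f x extreme_point_of f ` S \<longleftrightarrow> x extreme_point_of S"
  using face_of_linear_image[of f "{x}" S] by (simp add: face_of_singleton)

lemma extreme_point_flip_signs:
  assumes "absolute_norm N" "signs s" "e extreme_point_of unit_ball N"
  shows "flip_signs s e extreme_point_of unit_ball N"
  using extreme_point_linear_image[OF linear_flip_signs inj_flip_signs[OF assms(2)]]
    flip_signs_unit_ball[OF assms(1,2)] assms(3) by metis

lemma extreme_point_abs:
  assumes "absolute_norm N" "e extreme_point_of unit_ball N"
  shows "(\<chi> j. \<bar>e $ j\<bar>) extreme_point_of unit_ball N"
  using extreme_point_flip_signs[OF assms(1) signs_sign_vec[of e] assms(2)] by (simp add: flip_sign_vec)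


section \<open>Extreme points of the unit ball of an absolute norm\<close>

lemma axis_in_unit_ball:
  assumes "absolute_norm N"
  shows "axis j 1 \<in> unit_ball N" "- axis j 1 \<in> unit_ball N"
  using absolute_normD[OF assms] norm_fun_scale[of N "-1"] unfolding unit_ball_def by auto

lemma zero_not_extreme_point:
  assumes "absolute_norm N"
  shows "\<not> (0::real^'n) extreme_point_of unit_ball N"
proof
  assume zero: "(0::real^'n) extreme_point_of unit_ball N"
  define u :: "real^'n" where "u = axis undefined 1"
  have "u \<noteq> - u" unfolding u_def by (metis axis_nth neg_equal_zero one_neq_zero vector_uminus_component)
  then have "0 \<in> open_segment u (- u)"
    using midpoint_in_open_segment[of u "- u"] by (simp add: midpoint_def)
  then show False using zero axis_in_unit_ball[OF assms] unfolding extreme_point_of_def u_def by metis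
qed

text \<open>Setting one coordinate to zero does not increase an absolute norm: the result is the
  midpoint of x and of x with the sign of that coordinate flipped.\<close>

lemma absolute_norm_zero_coordinate:
  assumes an: "absolute_norm N"
  shows "N (x - (x $ i) *\<^sub>R axis i 1) \<le> N x"
proof -
  have nf: "is_norm_fun N" by (rule absolute_normD(1)[OF an])
  define s where "s = (\<chi> j. if j = i then -1 else (1::real))"
  have s: "signs s" unfolding s_def signs_def by simp
  have "x - (x $ i) *\<^sub>R axis i 1 = (1/2) *\<^sub>R x + (1/2) *\<^sub>R flip_signs s x"
    unfolding s_def by (simp add: vec_eq_iff axis_def)
  also have "N \<dots> \<le> (1/2) * N x + (1/2) * N (flip_signs s x)"
    using norm_fun_triangle[OF nf, of "(1/2) *\<^sub>R x" "(1/2) *\<^sub>R flip_signs s x"]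
      norm_fun_scale[OF nf] by simp
  also have "\<dots> = N x" using absolute_norm_flip_signs[OF an s] by simp
  finally show ?thesis .
qed

text \<open>Upper monotonicity of nonnegative extreme points in the coordinate directions: pushing
  a nonnegative extreme point e along a unit vector leaves the unit ball.  Otherwise e would
  be the midpoint of e -+ e_i (if e_i = 0), or lie strictly between e + e_i and e with its
  i-th coordinate set to zero (if e_i > 0).\<close>

lemma nonneg_extreme_point_axis:
  assumes an: "absolute_norm N" and e: "e extreme_point_of unit_ball N" and nn: "nonneg_vec e"
  shows "1 < N (e + axis i 1)"
proof (rule ccontr)
  assume "\<not> 1 < N (e + axis i 1)"
  then have plus: "e + axis i 1 \<in> unit_ball N" unfolding unit_ball_def by simp
  have eB: "e \<in> unit_ball N"
    and noseg: "\<And>a b. a \<in> unit_ball N \<Longrightarrow> b \<in> unit_ball N \<Longrightarrow> e \<notin> open_segment a b"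
    using e unfolding extreme_point_of_def by auto
  show False
  proof (cases "e $ i = 0")
    case True
    have "N (e - axis i 1) = N (e + axis i 1)"
      by (rule absolute_norm_abs_eq[OF an]) (auto simp: axis_def True)
    then have minus: "e - axis i 1 \<in> unit_ball N" using plus unfolding unit_ball_def by simp
    have "(e - axis i 1) $ i \<noteq> (e + axis i 1) $ i" by (simp add: axis_def)
    then have "e - axis i 1 \<noteq> e + axis i 1" by metis
    then have "midpoint (e - axis i 1) (e + axis i 1) \<in> open_segment (e - axis i 1) (e + axis i 1)"
      by simp
    moreover have "midpoint (e - axis i 1) (e + axis i 1) = e"
      by (simp add: midpoint_def vec_eq_iff)
    ultimately show False using noseg[OF minus plus] by simp
  next
    case False
    then have pos: "0 < e $ i" using nn unfolding nonneg_vec_def by (metis less_eq_real_def)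
    define z where "z = e - (e $ i) *\<^sub>R axis i 1"
    have zB: "z \<in> unit_ball N"
      using eB absolute_norm_zero_coordinate[OF an, of e i] unfolding z_def unit_ball_def by simp
    define t where "t = e $ i / (1 + e $ i)"
    have t: "0 < t" "t < 1" unfolding t_def using pos by auto
    have "z $ i \<noteq> (e + axis i 1) $ i" using pos by (simp add: z_def axis_def)
    then have "z \<noteq> e + axis i 1" by metis
    moreover have "e = (1 - t) *\<^sub>R z + t *\<^sub>R (e + axis i 1)"
    proof -
      have "(1 - t) * e $ i = t" unfolding t_def using pos by (simp add: field_simps)
      then show ?thesis unfolding z_def by (simp add: vec_eq_iff axis_def algebra_simps)
    qed
    ultimately have "e \<in> open_segment z (e + axis i 1)" unfolding in_segment using t by blast
    then show False using noseg[OF zB plus] by simp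
  qed
qed


section \<open>Maximal convex subsets and norming functionals\<close>

text \<open>By Zorn's lemma every point of a set lies in a maximal convex subset of it.\<close>

lemma maximal_convex_subset_exists:
  assumes p: "p \<in> S"
  obtains F where "maximal_convex_subset F S" "p \<in> F"
proof -
  define A where "A = {G. p \<in> G \<and> G \<subseteq> S \<and> convex G}"
  have "\<Union>C \<in> A" if C: "C \<noteq> {}" "subset.chain A C" for C
  proof -
    have CA: "C \<subseteq> A" and lin: "\<And>X Y. X \<in> C \<Longrightarrow> Y \<in> C \<Longrightarrow> X \<subseteq> Y \<or> Y \<subseteq> X"
      using C(2) unfolding subset_chain_def by auto
    have "convex (\<Union>C)" unfolding convex_def
    proof (intro ballI allI impI)
      fix x y and u v :: real
      assume "x \<in> \<Union>C" "y \<in> \<Union>C" "0 \<le> u" "0 \<le> v" "u + v = 1"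
      then obtain X Y where "X \<in> C" "Y \<in> C" "x \<in> X" "y \<in> Y" by auto
      then obtain Z where "Z \<in> C" "x \<in> Z" "y \<in> Z" using lin by blast
      with \<open>0 \<le> u\<close> \<open>0 \<le> v\<close> \<open>u + v = 1\<close> CA show "u *\<^sub>R x + v *\<^sub>R y \<in> \<Union>C"
        unfolding A_def convex_def by blast
    qed
    then show ?thesis using C CA unfolding A_def by auto
  qed
  moreover have "{p} \<in> A" unfolding A_def using p by simp
  ultimately obtain M where M: "M \<in> A" "\<And>X. X \<in> A \<Longrightarrow> M \<subseteq> X \<Longrightarrow> X = M"
    using subset_Zorn_nonempty[of A] by blast
  then have "maximal_convex_subset M S"
    unfolding maximal_convex_subset_def A_def by blast
  then show thesis using that M(1) unfolding A_def by blast
qed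

text \<open>A nonempty convex subset F of the unit sphere has a norming functional: a linear
  functional bounded by the norm and equal to 1 on F (separate F from the open unit ball).\<close>

lemma norming_functional:
  assumes nf: "is_norm_fun N" and F: "convex F" "F \<subseteq> unit_sphere N" "F \<noteq> {}"
  obtains w where "\<And>z. w \<bullet> z \<le> N z" "\<And>z. z \<in> F \<Longrightarrow> w \<bullet> z = 1"
proof -
  define U where "U = {z. N z < 1}"
  have "0 \<in> U" unfolding U_def using norm_fun_zero[OF nf] by simp
  have "convex U" unfolding U_def by (intro convex_sublevel_lt norm_fun_convex_on[OF nf])
  moreover have "U \<noteq> {}" using \<open>0 \<in> U\<close> by blast
  moreover have "U \<inter> F = {}" using F(2) unfolding U_def unit_sphere_def by auto
  ultimately obtain a b where a: "a \<noteq> 0" and U: "\<forall>x\<in>U. a \<bullet> x \<le> b"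
    and Fb: "\<forall>x\<in>F. b \<le> a \<bullet> x"
    using separating_hyperplane_sets[OF _ F(1) _ F(3)] by metis
  have scaled: "a \<bullet> z \<le> b * r" if "N z < r" for z r
  proof -
    have r: "0 < r" using that norm_fun_nonneg[OF nf, of z] by simp
    have "N ((1/r) *\<^sub>R z) < 1" using that r norm_fun_scale[OF nf, of "1/r"] by simp
    then have "a \<bullet> ((1/r) *\<^sub>R z) \<le> b" using U unfolding U_def by blast
    then show ?thesis using r by (simp add: field_simps)
  qed
  have b: "0 < b"
  proof -
    have "0 < a \<bullet> a" using a by simp
    also have "\<dots> \<le> b * (N a + 1)" by (rule scaled) simp
    finally show ?thesis using norm_fun_nonneg[OF nf, of a] by (simp add: zero_less_mult_iff)
  qed
  define w where "w = (1 / b) *\<^sub>R a"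
  have le: "w \<bullet> z \<le> N z" for z
  proof (rule field_le_epsilon)
    fix \<epsilon> :: real assume "0 < \<epsilon>"
    then have "a \<bullet> z \<le> b * (N z + \<epsilon>)" by (intro scaled) simp
    then show "w \<bullet> z \<le> N z + \<epsilon>" unfolding w_def using b by (simp add: field_simps)
  qed
  moreover have "w \<bullet> z = 1" if "z \<in> F" for z
  proof -
    have "1 \<le> w \<bullet> z" using Fb that b unfolding w_def by (simp add: field_simps)
    moreover have "N z = 1" using F(2) that unfolding unit_sphere_def by auto
    ultimately show ?thesis using le[of z] by simp
  qed
  ultimately show thesis using that by blast
qed

lemma CL_extreme_point_in_maximal:
  assumes CL: "CL_space N" and F: "maximal_convex_subset F (unit_sphere N)"
    and e: "e extreme_point_of unit_ball N" and e0: "e \<noteq> 0"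
  shows "e \<in> F \<or> - e \<in> F"
proof -
  have "e extreme_point_of convex hull (F \<union> uminus ` F \<union> {0})"
    using e CL F unfolding CL_space_def abs_convex_hull_def by auto
  then have "e \<in> F \<union> uminus ` F \<union> {0}" by (rule extreme_point_of_convex_hull)
  then show ?thesis using e0 by (auto simp: image_iff)
qed

text \<open>Replacing the coefficients of a norming functional of a maximal F by their absolute
  values yields a functional, still bounded by an absolute norm, that equals 1 at every
  nonnegative extreme point: these points are sign flips of extreme points in F or -F.\<close>

lemma abs_norming_functional:
  assumes an: "absolute_norm N" and CL: "CL_space N"
    and F: "maximal_convex_subset F (unit_sphere N)"
    and w_le: "\<And>z. w \<bullet> z \<le> N z" and w_F: "\<And>z. z \<in> F \<Longrightarrow> w \<bullet> z = 1"
  shows "\<And>z. (\<chi> j. \<bar>w $ j\<bar>) \<bullet> z \<le> N z"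
    and "\<And>e. e extreme_point_of unit_ball N \<Longrightarrow> nonneg_vec e \<Longrightarrow> (\<chi> j. \<bar>w $ j\<bar>) \<bullet> e = 1"
proof -
  define s where "s = sign_vec w"
  have s: "signs s" unfolding s_def by (rule signs_sign_vec)
  have flip: "(\<chi> j. \<bar>w $ j\<bar>) \<bullet> z = w \<bullet> flip_signs s z" for z
    unfolding s_def sign_vec_def inner_vec_def by (rule sum.cong) (auto simp: abs_if)
  show "(\<chi> j. \<bar>w $ j\<bar>) \<bullet> z \<le> N z" for z
    using w_le[of "flip_signs s z"] absolute_norm_flip_signs[OF an s] by (simp add: flip)
  fix e assume e: "e extreme_point_of unit_ball N" and nn: "nonneg_vec e"
  have "flip_signs s e extreme_point_of unit_ball N"
    by (rule extreme_point_flip_signs[OF an s e])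
  moreover have "flip_signs s e \<noteq> 0"
    using e zero_not_extreme_point[OF an] flip_signs_invol[OF s] linear_0[OF linear_flip_signs]
    by metis
  ultimately have "flip_signs s e \<in> F \<or> - flip_signs s e \<in> F"
    by (rule CL_extreme_point_in_maximal[OF CL F])
  then have "(\<chi> j. \<bar>w $ j\<bar>) \<bullet> e = 1 \<or> (\<chi> j. \<bar>w $ j\<bar>) \<bullet> e = -1"
    using w_F by (metis flip inner_minus_right minus_equation_iff)
  moreover have "0 \<le> (\<chi> j. \<bar>w $ j\<bar>) \<bullet> e"
    using nn unfolding nonneg_vec_def inner_vec_def by (auto intro: sum_nonneg)
  ultimately show "(\<chi> j. \<bar>w $ j\<bar>) \<bullet> e = 1" by linarith
qed

text \<open>The key functional: for an absolute CL-norm with some nonnegative extreme point, and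
  any coordinate i, there is a nonnegative functional g bounded by the norm, equal to 1 at all
  nonnegative extreme points, with g_i > 0.  It comes from a maximal convex subset of the
  sphere through the direction of e + e_i, which has norm > 1.\<close>

lemma positive_norming_functional:
  assumes an: "absolute_norm N" and CL: "CL_space N"
    and e: "e extreme_point_of unit_ball N" and e_nn: "nonneg_vec e"
  obtains g where "nonneg_vec g" "\<And>z. g \<bullet> z \<le> N z"
    "\<And>e. e extreme_point_of unit_ball N \<Longrightarrow> nonneg_vec e \<Longrightarrow> g \<bullet> e = 1" "0 < g $ i"
proof -
  have nf: "is_norm_fun N" by (rule absolute_normD(1)[OF an])
  define c where "c = N (e + axis i 1)"
  have c: "1 < c" unfolding c_def by (rule nonneg_extreme_point_axis[OF an e e_nn])
  define p where "p = (1 / c) *\<^sub>R (e + axis i 1)"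
  have "p \<in> unit_sphere N"
    unfolding p_def unit_sphere_def using norm_fun_scale[OF nf] c by (simp add: c_def)
  then obtain F where F: "maximal_convex_subset F (unit_sphere N)" "p \<in> F"
    by (rule maximal_convex_subset_exists)
  then obtain w where w_le: "\<And>z. w \<bullet> z \<le> N z" and w_F: "\<And>z. z \<in> F \<Longrightarrow> w \<bullet> z = 1"
    using norming_functional[OF nf] unfolding maximal_convex_subset_def by blast
  define g where "g = (\<chi> j. \<bar>w $ j\<bar>)"
  have g_le: "\<And>z. g \<bullet> z \<le> N z"
    and g_E: "\<And>e. e extreme_point_of unit_ball N \<Longrightarrow> nonneg_vec e \<Longrightarrow> g \<bullet> e = 1"
    unfolding g_def using abs_norming_functional[OF an CL F(1) w_le w_F] by auto
  have g_nn: "nonneg_vec g" unfolding g_def nonneg_vec_def by simp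
  text \<open>On nonnegative vectors g dominates w, so g(e + e_i) \<ge> w(e + e_i) = c.\<close>
  have "1 = (1 / c) * (w \<bullet> (e + axis i 1))"
    using w_F[OF F(2)] unfolding p_def inner_scaleR_right by simp
  then have "c = w \<bullet> (e + axis i 1)" using c by (simp add: field_simps)
  also have "\<dots> \<le> g \<bullet> (e + axis i 1)"
  proof -
    have "0 \<le> (e + axis i 1) $ j" for j using e_nn unfolding nonneg_vec_def by (simp add: axis_def)
    then show ?thesis unfolding g_def inner_vec_def by (auto intro!: sum_mono mult_right_mono)
  qed
  also have "\<dots> = 1 + g $ i" using g_E[OF e e_nn] by (simp add: inner_add_right inner_axis)
  finally have "0 < g $ i" using c by simp
  with g_nn g_le g_E show thesis using that by blast
qed


text \<open>Every point of the unit ball of an absolute norm is dominated coordinatewise, in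
  absolute value, by a convex combination of nonnegative extreme points: the dominated set is
  convex and contains all extreme points, so Krein-Milman applies.\<close>

lemma unit_ball_dominated:
  assumes an: "absolute_norm N" and z: "z \<in> unit_ball N"
  obtains w where "w \<in> convex hull {e. e extreme_point_of unit_ball N \<and> nonneg_vec e}"
    "\<And>i. \<bar>z $ i\<bar> \<le> w $ i"
proof -
  define E where "E = {e. e extreme_point_of unit_ball N \<and> nonneg_vec e}"
  define P where "P = {z. \<exists>w\<in>convex hull E. \<forall>i. \<bar>z $ i\<bar> \<le> w $ i}"
  have nf: "is_norm_fun N" by (rule absolute_normD(1)[OF an])
  have "{v. v extreme_point_of unit_ball N} \<subseteq> P"
  proof
    fix v assume "v \<in> {v. v extreme_point_of unit_ball N}"
    then have "(\<chi> j. \<bar>v $ j\<bar>) \<in> E"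
      unfolding E_def nonneg_vec_def using extreme_point_abs[OF an] by simp
    then show "v \<in> P" unfolding P_def by (force intro: hull_inc)
  qed
  moreover have "convex P" unfolding convex_def
  proof (intro ballI allI impI)
    fix z1 z2 and u v :: real assume "z1 \<in> P" "z2 \<in> P" and uv: "0 \<le> u" "0 \<le> v" "u + v = 1"
    then obtain w1 w2 where w: "w1 \<in> convex hull E" "w2 \<in> convex hull E"
      "\<And>i. \<bar>z1 $ i\<bar> \<le> w1 $ i" "\<And>i. \<bar>z2 $ i\<bar> \<le> w2 $ i"
      unfolding P_def by blast
    have "u *\<^sub>R w1 + v *\<^sub>R w2 \<in> convex hull E"
      using convexD[OF convex_convex_hull w(1,2) uv] .
    moreover have "\<bar>(u *\<^sub>R z1 + v *\<^sub>R z2) $ i\<bar> \<le> (u *\<^sub>R w1 + v *\<^sub>R w2) $ i" for i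
    proof -
      have "\<bar>(u *\<^sub>R z1 + v *\<^sub>R z2) $ i\<bar> \<le> u * \<bar>z1 $ i\<bar> + v * \<bar>z2 $ i\<bar>"
        using uv by (simp add: abs_mult order_trans[OF abs_triangle_ineq])
      also have "\<dots> \<le> u * w1 $ i + v * w2 $ i"
        using uv w(3,4) by (intro add_mono mult_left_mono) auto
      finally show ?thesis by simp
    qed
    ultimately show "u *\<^sub>R z1 + v *\<^sub>R z2 \<in> P" unfolding P_def by blast
  qed
  ultimately have "convex hull {v. v extreme_point_of unit_ball N} \<subseteq> P"
    by (rule hull_minimal)
  then have "z \<in> P"
    using z Krein_Milman_Minkowski[OF unit_ball_compact[OF nf] unit_ball_convex[OF nf]] by auto
  then show thesis using that unfolding P_def E_def by blast
qed

lemma upper_monotonicity_imp_hull: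
  assumes an: "absolute_norm N" and um: "upper_monotonicity_point N x"
  shows "x \<in> convex hull {e. e extreme_point_of unit_ball N \<and> nonneg_vec e}"
proof -
  have nf: "is_norm_fun N" by (rule absolute_normD(1)[OF an])
  have Nx: "N x = 1" and x_nn: "nonneg_vec x"
    and up: "\<And>y. nonneg_vec y \<Longrightarrow> y \<noteq> 0 \<Longrightarrow> N x < N (x + y)"
    using um unfolding upper_monotonicity_point_def unit_sphere_def by auto
  obtain w where w: "w \<in> convex hull {e. e extreme_point_of unit_ball N \<and> nonneg_vec e}"
    and dom: "\<And>i. \<bar>x $ i\<bar> \<le> w $ i"
    using unit_ball_dominated[OF an, of x] Nx unfolding unit_ball_def by auto
  have "convex hull {e. e extreme_point_of unit_ball N \<and> nonneg_vec e} \<subseteq> unit_ball N"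
    by (rule hull_minimal) (auto simp: extreme_point_of_def unit_ball_convex[OF nf])
  then have "N (x + (w - x)) \<le> N x" using w Nx unfolding unit_ball_def by auto
  moreover have "nonneg_vec (w - x)" using dom unfolding nonneg_vec_def by (simp add: abs_le_iff)
  ultimately have "w - x = 0" using up by fastforce
  then show ?thesis using w by simp
qed

text \<open>Conversely, in a CL-space every nonnegative point of the sphere lying in the convex
  hull of the nonnegative extreme points is a point of upper monotonicity: the functional g
  of the key lemma equals 1 at x and is positive at every y \<ge> 0 with y_i > 0.\<close>

lemma hull_imp_upper_monotonicity:
  fixes x :: "real^'n"
  assumes an: "absolute_norm N" and CL: "CL_space N"
    and x_S: "x \<in> unit_sphere N" and x_nn: "nonneg_vec x"
    and x_hull: "x \<in> convex hull {e. e extreme_point_of unit_ball N \<and> nonneg_vec e}"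
  shows "upper_monotonicity_point N x"
  unfolding upper_monotonicity_point_def
proof (intro conjI allI impI)
  fix y :: "real^'n" assume y: "nonneg_vec y \<and> y \<noteq> 0"
  then obtain i where y_i: "0 < y $ i"
    unfolding nonneg_vec_def by (metis less_eq_real_def vec_eq_iff zero_index)
  have "{e. e extreme_point_of unit_ball N \<and> nonneg_vec e} \<noteq> {}"
    using x_hull by (metis convex_hull_empty empty_iff)
  then obtain e where e: "e extreme_point_of unit_ball N" "nonneg_vec e" by blast
  obtain g where g_nn: "nonneg_vec g" and g_le: "\<And>z. g \<bullet> z \<le> N z"
    and g_E: "\<And>e. e extreme_point_of unit_ball N \<Longrightarrow> nonneg_vec e \<Longrightarrow> g \<bullet> e = 1"
    and g_i: "0 < g $ i"
    using positive_norming_functional[OF an CL e, of i] by blast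
  have "convex hull {e. e extreme_point_of unit_ball N \<and> nonneg_vec e} \<subseteq> {z. g \<bullet> z = 1}"
    using g_E by (intro hull_minimal convex_hyperplane) auto
  then have "g \<bullet> x = 1" using x_hull by auto
  moreover have "g $ i * y $ i \<le> g \<bullet> y"
    using g_nn y unfolding inner_vec_def inner_real_def nonneg_vec_def
    by (intro member_le_sum) auto
  moreover have "0 < g $ i * y $ i" using g_i y_i by simp
  moreover have "N x = 1" using x_S unfolding unit_sphere_def by simp
  ultimately show "N x < N (x + y)"
    using g_le[of "x + y"] by (simp add: inner_add_right)
qed (use x_S x_nn in auto)


theorem corollary5p4:
  fixes N :: "real^'n \<Rightarrow> real" and a :: "real^'n"
  assumes "absolute_norm N"
    and "CL_space N"
    and "(\<chi> i. \<bar>a $ i\<bar>) \<in> unit_sphere N"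
  shows "upper_monotonicity_point N (\<chi> i. \<bar>a $ i\<bar>) \<longleftrightarrow>
         (\<chi> i. \<bar>a $ i\<bar>) \<in> convex hull
            {e. e extreme_point_of (unit_ball N) \<and> nonneg_vec e}"
proof
  assume "upper_monotonicity_point N (\<chi> i. \<bar>a $ i\<bar>)"
  then show "(\<chi> i. \<bar>a $ i\<bar>) \<in> convex hull {e. e extreme_point_of (unit_ball N) \<and> nonneg_vec e}"
    by (rule upper_monotonicity_imp_hull[OF assms(1)])
next
  have "nonneg_vec (\<chi> i. \<bar>a $ i\<bar>)" unfolding nonneg_vec_def by simp
  moreover assume "(\<chi> i. \<bar>a $ i\<bar>) \<in> convex hull {e. e extreme_point_of (unit_ball N) \<and> nonneg_vec e}"
  ultimately show "upper_monotonicity_point N (\<chi> i. \<bar>a $ i\<bar>)"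
    by (rule hull_imp_upper_monotonicity[OF assms])
qed

end
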